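(* Let $G$ be a graph on $[n]$ that is upper crossing closed with respect to a total order $\unlhd$ on $E(G)$, and order the atoms of $NC_G$ (the single-edge bonds, identified with the edges of $G$) by $\unlhd$. Then for every $k\ge 0$, the set of $k$-element non-bounded-below (NBB) sets of atoms of $NC_G$ equals the set of noncrossing NBC sets of $G$ with $k$ edges.
   Context: All graphs are finite simple graphs with vertex set $[n]=\{1,\dots,n\}$; edges are written $ij$ with $i<j$. Two edges $a_1a_2$ and $b_1b_2$ cross if $a_1<b_1<a_2<b_2$ or $b_1<a_1<b_2<a_2$. A spanning subgraph is identified with its edge set. A bond of $G$ is a spanning subgraph each of whose connected components is an induced subgraph of $G$; it is noncrossing if there are no two distinct components with vertex sets $B,B'$ and $a,c\in B$, $b,d\in B'$, $a<b<c<d$. $NC_G$ is the poset of noncrossing bonds ordered by inclusion of edge sets. Two crossing edges $e,f$ are crossing closed if among all induced connected subgraphs of $G$ containing $e$ and $f$ there is a unique minimal one under containment, denoted $J(e,f)$; $G$ is crossing closed if all pairs of crossing edges are (then $NC_G$ is a lattice). $G$ is upper crossing closed with respect to $\unlhd$ if it is crossing closed and for all crossing edges $e,f$, $J(e,f)$ contains an edge $h$ with $h\lhd e$ and $h\lhd f$. In a lattice $L$ with a partial order $\unlhd$ on its atoms, a set $S$ of atoms is bounded below if there is an atom $a$ with $a\lhd s$ for all $s\in S$ and $a<\bigvee S$; a set of atoms is NBB if it contains no bounded-below subset. Given $\unlhd$, a broken circuit is the edge set of a cycle of $G$ with its smallest edge removed; an NBC set is a set of edges containing no broken circuit; a noncrossing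 NBC set is an NBC set no two of whose edges cross. *)

theory Defs
  imports Main
begin

(* Graphs on [n] = {1..n}: an edge ij with i<j is the pair (i,j). *)

type_synonym edge = "nat \<times> nat"

definition graph_on :: "nat \<Rightarrow> edge set \<Rightarrow> bool" where
  "graph_on n E \<longleftrightarrow> E \<subseteq> {(i,j). 1 \<le> i \<and> i < j \<and> j \<le> n}"

definition crosses :: "edge \<Rightarrow> edge \<Rightarrow> bool" where
  "crosses e f \<longleftrightarrow>
     (fst e < fst f \<and> fst f < snd e \<and> snd e < snd f) \<or>
     (fst f < fst e \<and> fst e < snd f \<and> snd f < snd e)"

definition conn :: "edge set \<Rightarrow> (nat \<times> nat) set" where
  "conn S = (S \<union> S\<inverse>)\<^sup>*"

definition components :: "nat \<Rightarrow> edge set \<Rightarrow> nat set set" where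
  "components n S = (\<lambda>v. {w \<in> {1..n}. (v, w) \<in> conn S}) ` {1..n}"

definition edges_within :: "edge set \<Rightarrow> nat set \<Rightarrow> edge set" where
  "edges_within S B = {e \<in> S. fst e \<in> B \<and> snd e \<in> B}"

definition is_bond :: "nat \<Rightarrow> edge set \<Rightarrow> edge set \<Rightarrow> bool" where
  "is_bond n E S \<longleftrightarrow> S \<subseteq> E \<and>
     (\<forall>B \<in> components n S. edges_within S B = edges_within E B)"

definition noncrossing_partition :: "nat set set \<Rightarrow> bool" where
  "noncrossing_partition P \<longleftrightarrow>
     (\<forall>B \<in> P. \<forall>B' \<in> P. B \<noteq> B' \<longrightarrow>
        \<not> (\<exists>a b c d. a \<in> B \<and> c \<in> B \<and> b \<in> B' \<and> d \<in> B' \<and> a < b \<and> b < c \<and> c < d))"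

(* the carrier of the poset NC_G (ordered by inclusion) *)
definition NC :: "nat \<Rightarrow> edge set \<Rightarrow> edge set set" where
  "NC n E = {S. is_bond n E S \<and> noncrossing_partition (components n S)}"

definition is_join :: "'a set set \<Rightarrow> 'a set set \<Rightarrow> 'a set \<Rightarrow> bool" where
  "is_join P X j \<longleftrightarrow> j \<in> P \<and> (\<forall>x \<in> X. x \<subseteq> j) \<and>
     (\<forall>u \<in> P. (\<forall>x \<in> X. x \<subseteq> u) \<longrightarrow> j \<subseteq> u)"

definition join :: "'a set set \<Rightarrow> 'a set set \<Rightarrow> 'a set" where
  "join P X = (THE j. is_join P X j)"

definition atoms :: "'a set set \<Rightarrow> 'a set set" where
  "atoms P = {a \<in> P. \<exists>b \<in> P. (\<forall>x \<in> P. b \<subseteq> x) \<and> b \<subset> a \<and>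
                 \<not> (\<exists>c \<in> P. b \<subset> c \<and> c \<subset> a)}"

definition bounded_below :: "'a set set \<Rightarrow> ('a set \<Rightarrow> 'a set \<Rightarrow> bool) \<Rightarrow> 'a set set \<Rightarrow> bool" where
  "bounded_below P lt S \<longleftrightarrow>
     (\<exists>a \<in> atoms P. (\<forall>s \<in> S. lt a s) \<and> a \<subset> join P S)"

definition NBB :: "'a set set \<Rightarrow> ('a set \<Rightarrow> 'a set \<Rightarrow> bool) \<Rightarrow> 'a set set \<Rightarrow> bool" where
  "NBB P lt T \<longleftrightarrow> (\<forall>S \<subseteq> T. \<not> bounded_below P lt S)"

definition induced_connected :: "nat \<Rightarrow> edge set \<Rightarrow> nat set \<Rightarrow> bool" where
  "induced_connected n E V \<longleftrightarrow> V \<subseteq> {1..n} \<and> V \<noteq> {} \<and>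
     (\<forall>u \<in> V. \<forall>v \<in> V. (u, v) \<in> conn (edges_within E V))"

definition icsets :: "nat \<Rightarrow> edge set \<Rightarrow> edge \<Rightarrow> edge \<Rightarrow> nat set set" where
  "icsets n E e f = {V. induced_connected n E V \<and> e \<in> edges_within E V \<and> f \<in> edges_within E V}"

definition minimal_icsets :: "nat \<Rightarrow> edge set \<Rightarrow> edge \<Rightarrow> edge \<Rightarrow> nat set set" where
  "minimal_icsets n E e f = {V \<in> icsets n E e f. \<not> (\<exists>W \<in> icsets n E e f. W \<subset> V)}"

definition crossing_closed_pair :: "nat \<Rightarrow> edge set \<Rightarrow> edge \<Rightarrow> edge \<Rightarrow> bool" where
  "crossing_closed_pair n E e f \<longleftrightarrow> (\<exists>!V. V \<in> minimal_icsets n E e f)"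

definition Jcl :: "nat \<Rightarrow> edge set \<Rightarrow> edge \<Rightarrow> edge \<Rightarrow> nat set" where
  "Jcl n E e f = (THE V. V \<in> minimal_icsets n E e f)"

definition crossing_closed :: "nat \<Rightarrow> edge set \<Rightarrow> bool" where
  "crossing_closed n E \<longleftrightarrow>
     (\<forall>e \<in> E. \<forall>f \<in> E. crosses e f \<longrightarrow> crossing_closed_pair n E e f)"

(* R: the (reflexive) total order \<unlhd> on E, as a relation; strict part \<lhd> *)
definition strict :: "(edge \<times> edge) set \<Rightarrow> edge \<Rightarrow> edge \<Rightarrow> bool" where
  "strict R h e \<longleftrightarrow> (h, e) \<in> R \<and> h \<noteq> e"

definition upper_crossing_closed :: "nat \<Rightarrow> edge set \<Rightarrow> (edge \<times> edge) set \<Rightarrow> bool" where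
  "upper_crossing_closed n E R \<longleftrightarrow> crossing_closed n E \<and>
     (\<forall>e \<in> E. \<forall>f \<in> E. crosses e f \<longrightarrow>
        (\<exists>h \<in> edges_within E (Jcl n E e f). strict R h e \<and> strict R h f))"

definition mk_edge :: "nat \<Rightarrow> nat \<Rightarrow> edge" where
  "mk_edge u v = (min u v, max u v)"

definition cycle_edge_sets :: "edge set \<Rightarrow> edge set set" where
  "cycle_edge_sets E = {C. C \<subseteq> E \<and> (\<exists>vs. distinct vs \<and> length vs \<ge> 3 \<and>
      C = {mk_edge (vs ! i) (vs ! ((i + 1) mod length vs)) | i. i < length vs})}"

definition smallest_edge :: "(edge \<times> edge) set \<Rightarrow> edge set \<Rightarrow> edge" where
  "smallest_edge R C = (THE c. c \<in> C \<and> (\<forall>d \<in> C. (c, d) \<in> R))"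

definition broken_circuits :: "edge set \<Rightarrow> (edge \<times> edge) set \<Rightarrow> edge set set" where
  "broken_circuits E R = (\<lambda>C. C - {smallest_edge R C}) ` cycle_edge_sets E"

definition NBC :: "edge set \<Rightarrow> (edge \<times> edge) set \<Rightarrow> edge set \<Rightarrow> bool" where
  "NBC E R S \<longleftrightarrow> S \<subseteq> E \<and> (\<forall>B \<in> broken_circuits E R. \<not> B \<subseteq> S)"

definition noncrossing_NBC :: "edge set \<Rightarrow> (edge \<times> edge) set \<Rightarrow> edge set \<Rightarrow> bool" where
  "noncrossing_NBC E R S \<longleftrightarrow> NBC E R S \<and> (\<forall>e \<in> S. \<forall>f \<in> S. \<not> crosses e f)"

definition atom_lt :: "(edge \<times> edge) set \<Rightarrow> edge set \<Rightarrow> edge set \<Rightarrow> bool" where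
  "atom_lt R a b \<longleftrightarrow> (\<exists>e f. a = {e} \<and> b = {f} \<and> strict R e f)"

end

theory Submission
  imports Defs "HOL-Library.Transitive_Closure_Table"
begin

text \<open>The atoms of \<open>NC\<^sub>G\<close> are the single-edge bonds. If a set \<open>S\<close> of edges is noncrossing, its
  components already form a noncrossing partition, so the join of its atoms is simply the set of
  edges of \<open>G\<close> whose endpoints are connected by \<open>S\<close>. Hence \<open>S\<close> is bounded below exactly when it
  connects the endpoints of an edge that is smaller than all edges of \<open>S\<close>; closing the connecting
  path to a cycle, this happens for some subset of \<open>S\<close> iff \<open>S\<close> contains a broken circuit. So
  NBB and NBC agree on noncrossing sets. A crossing pair \<open>e, f\<close>, on the other hand, is always
  bounded below: its join is the bond of the induced subgraph on \<open>J(e, f)\<close>, which by upper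
  crossing closure contains an edge below \<open>e\<close> and \<open>f\<close>. Hence NBB sets are noncrossing.\<close>

section \<open>Graphs and connectivity\<close>

lemma conn_refl [simp]: "(x, x) \<in> conn S"
  unfolding conn_def by simp

lemma conn_sym: "(x, y) \<in> conn S \<Longrightarrow> (y, x) \<in> conn S"
  unfolding conn_def by (metis sym_rtrancl[OF sym_Un_converse] symD)

lemma conn_trans: "(x, y) \<in> conn S \<Longrightarrow> (y, z) \<in> conn S \<Longrightarrow> (x, z) \<in> conn S"
  unfolding conn_def by (rule rtrancl_trans)

lemma conn_edge: "(a, b) \<in> S \<Longrightarrow> (a, b) \<in> conn S"
  unfolding conn_def by auto

lemma conn_mono: "S \<subseteq> U \<Longrightarrow> (x, y) \<in> conn S \<Longrightarrow> (x, y) \<in> conn U"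
  unfolding conn_def by (meson Un_mono converse_mono rtrancl_mono subsetD)

lemma conn_empty [simp]: "(x, y) \<in> conn {} \<longleftrightarrow> x = y"
  unfolding conn_def by simp

lemma conn_within_vertices:
  assumes "\<forall>(x, y) \<in> S. x \<in> V \<and> y \<in> V" and "(p, q) \<in> conn S"
  shows "p = q \<or> p \<in> V \<and> q \<in> V"
  using assms(2) unfolding conn_def
  by (induction rule: rtrancl_induct) (use assms(1) in auto)

lemma components_conn:
  assumes "B \<in> components n S" "a \<in> B" "c \<in> B"
  shows "(a, c) \<in> conn S"
proof -
  obtain v where "B = {w \<in> {1..n}. (v, w) \<in> conn S}"
    using assms(1) unfolding components_def by blast
  with assms(2,3) show ?thesis by (metis (no_types, lifting) conn_sym conn_trans mem_Collect_eq)
qed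

lemma components_eqI:
  assumes "B \<in> components n S" "B' \<in> components n S" "a \<in> B" "b \<in> B'" "(a, b) \<in> conn S"
  shows "B = B'"
proof -
  obtain v v' where B: "B = {w \<in> {1..n}. (v, w) \<in> conn S}"
    and B': "B' = {w \<in> {1..n}. (v', w) \<in> conn S}"
    using assms(1,2) unfolding components_def by blast
  have "(v, v') \<in> conn S"
    using assms(3-5) conn_trans[of v a S b] conn_trans[of v b S v'] conn_sym[of v' b S]
    unfolding B B' by blast
  then have "(v, w) \<in> conn S \<longleftrightarrow> (v', w) \<in> conn S" for w
    by (metis conn_sym conn_trans)
  then show ?thesis unfolding B B' by simp
qed

lemma component_in_components:
  "v \<in> {1..n} \<Longrightarrow> {w \<in> {1..n}. (v, w) \<in> conn S} \<in> components n S"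
  unfolding components_def by auto

lemma graph_on_finite: "graph_on n E \<Longrightarrow> finite E"
  unfolding graph_on_def by (rule finite_subset[of _ "{1..n} \<times> {1..n}"]) auto

lemma graph_on_less: "graph_on n E \<Longrightarrow> (x, y) \<in> E \<Longrightarrow> x < y"
  unfolding graph_on_def by auto

lemma graph_on_vertices: "graph_on n E \<Longrightarrow> e \<in> E \<Longrightarrow> fst e \<in> {1..n} \<and> snd e \<in> {1..n}"
  unfolding graph_on_def by auto

section \<open>Noncrossing edge sets\<close>

definition noncrossing :: "edge set \<Rightarrow> bool" where
  "noncrossing S \<longleftrightarrow> (\<forall>e \<in> S. \<forall>f \<in> S. \<not> crosses e f)"

lemma noncrossing_subset: "noncrossing S \<Longrightarrow> S' \<subseteq> S \<Longrightarrow> noncrossing S'"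
  unfolding noncrossing_def by blast

lemma noncrossing_NBC_iff: "noncrossing_NBC E R S \<longleftrightarrow> NBC E R S \<and> noncrossing S"
  unfolding noncrossing_NBC_def noncrossing_def ..

lemma conn_passes_over:
  assumes S: "\<forall>(x, y) \<in> S. x < y"
    and pq: "(p, q) \<in> conn S" and "p < b" "b < q" and pb: "(p, b) \<notin> conn S"
  shows "\<exists>x y. (x, y) \<in> S \<and> x < b \<and> b < y \<and> (p, x) \<in> conn S"
  using pq \<open>b < q\<close> unfolding conn_def
proof (induction rule: rtrancl_induct)
  case base
  with \<open>p < b\<close> show ?case by simp
next
  case (step q z)
  consider "q < b" | "q = b" | "b < q" by linarith
  then show ?case
  proof cases
    case 1
    with step S have "(q, z) \<in> S" by fastforce
    with 1 step show ?thesis by blast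
  next
    case 2
    with step pb show ?thesis by (simp add: conn_def)
  qed (use step in blast)
qed

text \<open>Leaving the interval \<open>(x, y)\<close> would need an edge crossing \<open>(x, y)\<close>.\<close>

lemma noncrossing_conn_inside:
  assumes S: "\<forall>(x, y) \<in> S. x < y" and nc: "noncrossing S"
    and xy: "(x, y) \<in> S" and pq: "(p, q) \<in> conn S" and "x < p" "p < y"
    and px: "(p, x) \<notin> conn S"
  shows "x < q \<and> q < y"
  using pq unfolding conn_def
proof (induction rule: rtrancl_induct)
  case base
  with \<open>x < p\<close> \<open>p < y\<close> show ?case by simp
next
  case (step q z)
  have pz: "(p, z) \<in> conn S"
    using step(1,2) unfolding conn_def by (rule rtrancl_into_rtrancl)
  have "z \<noteq> x" using pz px by auto
  moreover have "z \<noteq> y"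
    using pz px conn_sym[OF conn_edge[OF xy]] conn_trans by metis
  moreover have False if "y < z"
  proof -
    have "(q, z) \<in> S" using step that S by fastforce
    moreover have "crosses (x, y) (q, z)" using step(3) that unfolding crosses_def by simp
    ultimately show False using nc xy unfolding noncrossing_def by blast
  qed
  moreover have False if "z < x"
  proof -
    have "(z, q) \<in> S" using step that S by fastforce
    moreover have "crosses (z, q) (x, y)" using step(3) that unfolding crosses_def by simp
    ultimately show False using nc xy unfolding noncrossing_def by blast
  qed
  ultimately show ?case by fastforce
qed

lemma noncrossing_conn_interleaved:
  assumes S: "\<forall>(x, y) \<in> S. x < y" and nc: "noncrossing S"
    and "a < b" "b < c" "c < d" and ac: "(a, c) \<in> conn S" and bd: "(b, d) \<in> conn S"
  shows "(a, b) \<in> conn S"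
proof (rule ccontr)
  assume ab: "(a, b) \<notin> conn S"
  obtain x y where xy: "(x, y) \<in> S" "x < b" "b < y" "(a, x) \<in> conn S"
    using conn_passes_over[OF S ac \<open>a < b\<close> \<open>b < c\<close> ab] by blast
  have bc: "(b, c) \<notin> conn S"
    using ab ac conn_trans conn_sym by metis
  obtain u v where uv: "(u, v) \<in> S" "u < c" "c < v" "(b, u) \<in> conn S"
    using conn_passes_over[OF S bd \<open>b < c\<close> \<open>c < d\<close> bc] by blast
  have "(b, x) \<notin> conn S" using ab xy(4) conn_trans conn_sym by metis
  with xy uv have "x < u"
    using noncrossing_conn_inside[OF S nc xy(1) uv(4)] by simp
  moreover have "u < x"
  proof -
    have "(c, u) \<notin> conn S" using bc uv(4) conn_trans conn_sym by metis
    moreover have "(c, x) \<in> conn S" using ac xy(4) conn_trans conn_sym by metis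
    ultimately show ?thesis
      using noncrossing_conn_inside[OF S nc uv(1), of c x] uv by simp
  qed
  ultimately show False by simp
qed

lemma noncrossing_components:
  assumes S: "\<forall>(x, y) \<in> S. x < y" and nc: "noncrossing S"
  shows "noncrossing_partition (components n S)"
  unfolding noncrossing_partition_def
proof (intro ballI impI notI)
  fix B B' assume B: "B \<in> components n S" and B': "B' \<in> components n S" and "B \<noteq> B'"
    and "\<exists>a b c d. a \<in> B \<and> c \<in> B \<and> b \<in> B' \<and> d \<in> B' \<and> a < b \<and> b < c \<and> c < d"
  then obtain a b c d where abcd: "a \<in> B" "c \<in> B" "b \<in> B'" "d \<in> B'" "a < b" "b < c" "c < d"
    by blast
  have "(a, b) \<in> conn S"
    using noncrossing_conn_interleaved[OF S nc abcd(5-7)] components_conn[OF B]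
      components_conn[OF B'] abcd
    by blast
  with components_eqI[OF B B' abcd(1,3)] \<open>B \<noteq> B'\<close> show False by blast
qed

section \<open>Joins of atoms\<close>

definition edge_closure :: "edge set \<Rightarrow> edge set \<Rightarrow> edge set" where
  "edge_closure E S = {e \<in> E. (fst e, snd e) \<in> conn S}"

lemma subset_edge_closure: "S \<subseteq> E \<Longrightarrow> S \<subseteq> edge_closure E S"
  unfolding edge_closure_def by (auto intro: conn_edge)

lemma conn_edge_closure:
  assumes "S \<subseteq> E"
  shows "conn (edge_closure E S) = conn S"
proof
  show "conn S \<subseteq> conn (edge_closure E S)"
    using conn_mono[OF subset_edge_closure[OF assms]] by auto
  have "edge_closure E S \<union> (edge_closure E S)\<inverse> \<subseteq> conn S"
    unfolding edge_closure_def using conn_sym by fastforce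
  then have "(edge_closure E S \<union> (edge_closure E S)\<inverse>)\<^sup>* \<subseteq> (conn S)\<^sup>*"
    by (rule rtrancl_mono)
  then show "conn (edge_closure E S) \<subseteq> conn S"
    unfolding conn_def by simp
qed

lemma bond_edge_closure_subset:
  assumes U: "is_bond n E U" and G: "graph_on n E"
  shows "edge_closure E U \<subseteq> U"
proof
  fix e assume "e \<in> edge_closure E U"
  then have e: "e \<in> E" "(fst e, snd e) \<in> conn U"
    unfolding edge_closure_def by auto
  define B where "B = {w \<in> {1..n}. (fst e, w) \<in> conn U}"
  have "B \<in> components n U"
    unfolding B_def using component_in_components graph_on_vertices[OF G e(1)] by blast
  then have "edges_within U B = edges_within E B"
    using U unfolding is_bond_def by blast
  moreover have "e \<in> edges_within E B"
    unfolding edges_within_def B_def using graph_on_vertices[OF G e(1)] e by auto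
  ultimately show "e \<in> U" unfolding edges_within_def by blast
qed

lemma edge_closure_in_NC:
  assumes G: "graph_on n E" and "S \<subseteq> E" and nc: "noncrossing S"
  shows "edge_closure E S \<in> NC n E"
proof -
  have comps: "components n (edge_closure E S) = components n S"
    unfolding components_def conn_edge_closure[OF \<open>S \<subseteq> E\<close>] ..
  have "edges_within (edge_closure E S) B = edges_within E B"
    if "B \<in> components n S" for B
    using components_conn[OF that]
    unfolding edges_within_def edge_closure_def by blast
  then have "is_bond n E (edge_closure E S)"
    unfolding is_bond_def comps by (auto simp: edge_closure_def)
  moreover have "\<forall>(x, y) \<in> S. x < y"
    using G \<open>S \<subseteq> E\<close> graph_on_less by blast
  then have "noncrossing_partition (components n (edge_closure E S))"
    unfolding comps using noncrossing_components nc by blast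
  ultimately show ?thesis unfolding NC_def by simp
qed

lemma join_eqI: "is_join P X j \<Longrightarrow> join P X = j"
  unfolding join_def by (rule the_equality) (auto simp: is_join_def)

lemma join_singletons_noncrossing:
  assumes G: "graph_on n E" and "S \<subseteq> E" and nc: "noncrossing S"
  shows "join (NC n E) ((\<lambda>e. {e}) ` S) = edge_closure E S"
proof (rule join_eqI)
  have "edge_closure E S \<subseteq> U" if "U \<in> NC n E" "S \<subseteq> U" for U
  proof -
    have U: "is_bond n E U" using that(1) unfolding NC_def by simp
    have "edge_closure E S \<subseteq> edge_closure E U"
      using conn_mono[OF that(2)] unfolding edge_closure_def by blast
    then show ?thesis using bond_edge_closure_subset[OF U G] by blast
  qed
  then show "is_join (NC n E) ((\<lambda>e. {e}) ` S) (edge_closure E S)"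
    unfolding is_join_def
    using edge_closure_in_NC[OF assms] subset_edge_closure[OF \<open>S \<subseteq> E\<close>] by auto
qed

lemma edge_closure_empty: "graph_on n E \<Longrightarrow> edge_closure E {} = {}"
  unfolding edge_closure_def by (auto dest: graph_on_less)

lemma edge_closure_singleton:
  assumes G: "graph_on n E" and "e \<in> E"
  shows "edge_closure E {e} = {e}"
proof -
  have "f = e" if "f \<in> E" "(fst f, snd f) \<in> conn {e}" for f
  proof -
    have less: "fst f < snd f" "fst e < snd e"
      using graph_on_less[OF G] that(1) \<open>e \<in> E\<close> by auto
    then have "fst f \<in> {fst e, snd e} \<and> snd f \<in> {fst e, snd e}"
      using conn_within_vertices[of "{e}" "{fst e, snd e}"] that(2) by fastforce
    with less show "f = e"
      by (cases e, cases f) auto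
  qed
  then show ?thesis
    using subset_edge_closure[of "{e}" E] \<open>e \<in> E\<close> unfolding edge_closure_def by auto
qed

lemma atoms_NC:
  assumes G: "graph_on n E"
  shows "atoms (NC n E) = (\<lambda>e. {e}) ` E"
proof -
  have empty: "{} \<in> NC n E"
    using edge_closure_in_NC[OF G, of "{}"] by (simp add: edge_closure_empty[OF G] noncrossing_def)
  have singleton: "{e} \<in> NC n E" if "e \<in> E" for e
    using edge_closure_in_NC[OF G, of "{e}"] that
    by (simp add: edge_closure_singleton[OF G] noncrossing_def crosses_def)
  have "a \<in> (\<lambda>e. {e}) ` E" if atom: "a \<in> atoms (NC n E)" for a
  proof -
    obtain b where a: "a \<in> NC n E" and b: "\<forall>x \<in> NC n E. b \<subseteq> x" "b \<subset> a"
      "\<not> (\<exists>c \<in> NC n E. b \<subset> c \<and> c \<subset> a)"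
      using atom unfolding atoms_def by blast
    have "b = {}" using b(1) empty by blast
    with b(2) obtain e where "e \<in> a" by blast
    moreover have "a \<subseteq> E" using a unfolding NC_def is_bond_def by simp
    ultimately have "e \<in> E" "a = {e}"
      using b(3) singleton \<open>b = {}\<close> by blast+
    then show ?thesis by blast
  qed
  moreover have "{e} \<in> atoms (NC n E)" if "e \<in> E" for e
    unfolding atoms_def using singleton[OF that] empty by blast
  ultimately show ?thesis by blast
qed

section \<open>Joins of crossing pairs\<close>

lemma finite_icsets: "finite (icsets n E e f)"
  by (rule finite_subset[of _ "Pow {1..n}"]) (auto simp: icsets_def induced_connected_def)

lemma Jcl_in_icsets:
  "crossing_closed_pair n E e f \<Longrightarrow> Jcl n E e f \<in> icsets n E e f"
  unfolding crossing_closed_pair_def Jcl_def minimal_icsets_def by (drule theI') simp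

lemma Jcl_subset:
  assumes cc: "crossing_closed_pair n E e f" and V: "V \<in> icsets n E e f"
  shows "Jcl n E e f \<subseteq> V"
proof -
  obtain W where W: "W \<in> icsets n E e f" "W \<subseteq> V" "\<forall>U \<in> icsets n E e f. U \<subseteq> W \<longrightarrow> W = U"
    using finite_has_minimal2[OF finite_icsets V] by blast
  then have "W \<in> minimal_icsets n E e f"
    unfolding minimal_icsets_def by blast
  then have "W = Jcl n E e f"
    using cc theI'[of "\<lambda>V. V \<in> minimal_icsets n E e f"]
    unfolding crossing_closed_pair_def Jcl_def by blast
  with W show ?thesis by simp
qed

lemma edges_within_in_NC:
  assumes G: "graph_on n E" and V: "induced_connected n E V"
  shows "edges_within E V \<in> NC n E"
proof -
  let ?W = "edges_within E V"
  have W_vertices: "\<forall>(x, y) \<in> ?W. x \<in> V \<and> y \<in> V"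
    unfolding edges_within_def by auto
  have blocks: "B = V \<or> (\<exists>v. B = {v})" if B: "B \<in> components n ?W" for B
  proof -
    obtain v where v: "v \<in> {1..n}" "B = {w \<in> {1..n}. (v, w) \<in> conn ?W}"
      using B unfolding components_def by blast
    show ?thesis
    proof (cases "v \<in> V")
      case True
      then have "B = V"
        using V conn_within_vertices[OF W_vertices] unfolding v(2) induced_connected_def by blast
      then show ?thesis ..
    next
      case False
      then have "B = {v}"
        using v conn_within_vertices[OF W_vertices, of v] by auto
      then show ?thesis by blast
    qed
  qed
  have no_loops: "edges_within X {v} = {}" if "X \<subseteq> E" for X v
    using that graph_on_less[OF G] unfolding edges_within_def by fastforce
  have "is_bond n E ?W"
    unfolding is_bond_def
  proof (intro conjI ballI)
    show "?W \<subseteq> E" unfolding edges_within_def by auto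
    fix B assume "B \<in> components n ?W"
    with blocks \<open>?W \<subseteq> E\<close> no_loops show "edges_within ?W B = edges_within E B"
      unfolding edges_within_def by blast
  qed
  moreover have "noncrossing_partition (components n ?W)"
    unfolding noncrossing_partition_def
  proof (intro ballI impI notI)
    fix B B' assume "B \<in> components n ?W" "B' \<in> components n ?W" "B \<noteq> B'"
      and "\<exists>a b c d. a \<in> B \<and> c \<in> B \<and> b \<in> B' \<and> d \<in> B' \<and> a < b \<and> b < c \<and> c < d"
    with blocks have "B = V" "B' = V" by (metis less_irrefl less_trans singletonD)+
    with \<open>B \<noteq> B'\<close> show False by simp
  qed
  ultimately show ?thesis unfolding NC_def by simp
qed

lemma conn_within_component:
  assumes G: "graph_on n E" and "U \<subseteq> E"
    and B: "B = {w \<in> {1..n}. (v, w) \<in> conn U}" and "x \<in> B" and xy: "(x, y) \<in> conn U"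
  shows "(x, y) \<in> conn (edges_within U B) \<and> y \<in> B"
  using xy unfolding conn_def
proof (induction rule: rtrancl_induct)
  case base
  with \<open>x \<in> B\<close> show ?case by simp
next
  case (step y z)
  then have y: "y \<in> B" and xy: "(x, y) \<in> (edges_within U B \<union> (edges_within U B)\<inverse>)\<^sup>*"
    by (simp_all add: conn_def)
  have yz: "(y, z) \<in> U \<or> (z, y) \<in> U" using step(2) by auto
  then have "z \<in> {1..n}" using \<open>U \<subseteq> E\<close> graph_on_vertices[OF G] by fastforce
  moreover have "(v, y) \<in> conn U" using y B by simp
  with yz have "(v, z) \<in> conn U" using conn_trans conn_edge conn_sym by metis
  ultimately have z: "z \<in> B" unfolding B by simp
  with y yz have "(y, z) \<in> edges_within U B \<union> (edges_within U B)\<inverse>"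
    unfolding edges_within_def by auto
  with xy z show ?case by (simp add: conn_def rtrancl_into_rtrancl)
qed

lemma bond_component_induced_connected:
  assumes G: "graph_on n E" and U: "is_bond n E U" and v: "v \<in> {1..n}"
  shows "induced_connected n E {w \<in> {1..n}. (v, w) \<in> conn U}"
    (is "induced_connected n E ?B")
proof -
  have B: "?B \<in> components n U" using component_in_components[OF v] .
  have "U \<subseteq> E" using U unfolding is_bond_def by simp
  then have "(x, y) \<in> conn (edges_within U ?B)" if "x \<in> ?B" "y \<in> ?B" for x y
    using conn_within_component[OF G _ refl that(1)] that components_conn[OF B] by blast
  moreover have "edges_within U ?B = edges_within E ?B"
    using U B unfolding is_bond_def by blast
  ultimately show ?thesis
    unfolding induced_connected_def using v by auto
qed

text \<open>Two crossing edges of a noncrossing bond lie in one block, whose vertex set is an induced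
  connected subgraph containing both edges and hence contains \<open>J(e, f)\<close>.\<close>

lemma Jcl_edges_subset_bond:
  assumes G: "graph_on n E" and cc: "crossing_closed_pair n E e f"
    and U: "U \<in> NC n E" and "e \<in> U" "f \<in> U" and ef: "crosses e f"
  shows "edges_within E (Jcl n E e f) \<subseteq> U"
proof -
  have bond: "is_bond n E U" and ncp: "noncrossing_partition (components n U)"
    using U unfolding NC_def by auto
  then have "U \<subseteq> E" unfolding is_bond_def by simp
  obtain a c b d where e: "e = (a, c)" and f: "f = (b, d)" by (cases e, cases f)
  have vertices: "a \<in> {1..n}" "b \<in> {1..n}" "c \<in> {1..n}" "d \<in> {1..n}"
    using graph_on_vertices[OF G] \<open>e \<in> U\<close> \<open>f \<in> U\<close> \<open>U \<subseteq> E\<close> e f by fastforce+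
  define Ba where "Ba = {w \<in> {1..n}. (a, w) \<in> conn U}"
  define Bb where "Bb = {w \<in> {1..n}. (b, w) \<in> conn U}"
  have comps: "Ba \<in> components n U" "Bb \<in> components n U"
    unfolding Ba_def Bb_def using component_in_components vertices by blast+
  have mem: "a \<in> Ba" "c \<in> Ba" "b \<in> Bb" "d \<in> Bb"
    unfolding Ba_def Bb_def using vertices conn_edge \<open>e \<in> U\<close> \<open>f \<in> U\<close> e f by auto
  have "a < b \<and> b < c \<and> c < d \<or> b < a \<and> a < d \<and> d < c"
    using ef unfolding e f crosses_def by auto
  then have "Ba = Bb"
    using ncp comps mem unfolding noncrossing_partition_def by metis
  with mem have "b \<in> Ba" "d \<in> Ba" by simp_all
  then have "Ba \<in> icsets n E e f"
    using bond_component_induced_connected[OF G bond vertices(1), folded Ba_def]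
      mem \<open>U \<subseteq> E\<close> \<open>e \<in> U\<close> \<open>f \<in> U\<close>
    unfolding icsets_def edges_within_def e f by auto
  then have "edges_within E (Jcl n E e f) \<subseteq> edges_within E Ba"
    using Jcl_subset[OF cc] unfolding edges_within_def by blast
  also have "\<dots> = edges_within U Ba"
    using bond comps unfolding is_bond_def by blast
  finally show ?thesis unfolding edges_within_def by blast
qed

lemma join_crossing_pair:
  assumes G: "graph_on n E" and cc: "crossing_closed_pair n E e f"
    and "e \<in> E" "f \<in> E" and ef: "crosses e f"
  shows "join (NC n E) {{e}, {f}} = edges_within E (Jcl n E e f)"
proof (rule join_eqI)
  have "Jcl n E e f \<in> icsets n E e f" by (rule Jcl_in_icsets[OF cc])
  then show "is_join (NC n E) {{e}, {f}} (edges_within E (Jcl n E e f))"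
    unfolding is_join_def
    using edges_within_in_NC[OF G] Jcl_edges_subset_bond[OF G cc _ _ _ ef]
    by (auto simp: icsets_def)
qed

section \<open>Cycles\<close>

lemma mk_edge_eq_iff: "mk_edge a b = mk_edge c d \<longleftrightarrow> a = c \<and> b = d \<or> a = d \<and> b = c"
  unfolding mk_edge_def by (auto simp: min_def max_def)

lemma mk_edge_commute: "mk_edge a b = mk_edge b a"
  unfolding mk_edge_def by (simp add: min.commute max.commute)

lemma mk_edge_mem:
  "\<forall>(x, y) \<in> S. x < y \<Longrightarrow> (a, b) \<in> S \<or> (b, a) \<in> S \<Longrightarrow> mk_edge a b \<in> S"
  unfolding mk_edge_def by (auto simp: min_def max_def)

lemma conn_mk_edge_iff: "(fst (mk_edge a b), snd (mk_edge a b)) \<in> conn S \<longleftrightarrow> (a, b) \<in> conn S"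
  unfolding mk_edge_def by (auto simp: min_def max_def intro: conn_sym)

lemma conn_mk_edge: "mk_edge a b \<in> S \<Longrightarrow> (a, b) \<in> conn S"
  using conn_mk_edge_iff conn_edge by (metis prod.collapse)

text \<open>The index-based cycles of \<^const>\<open>cycle_edge_sets\<close>, recast as a path plus a closing edge so
  that list induction and rotation apply.\<close>

fun path_edges :: "nat list \<Rightarrow> edge set" where
  "path_edges (a # b # vs) = insert (mk_edge a b) (path_edges (b # vs))"
| "path_edges _ = {}"

definition cycle_edges :: "nat list \<Rightarrow> edge set" where
  "cycle_edges vs = insert (mk_edge (last vs) (hd vs)) (path_edges vs)"

lemma path_edges_conv_nth:
  "path_edges vs = {mk_edge (vs ! i) (vs ! Suc i) | i. Suc i < length vs}"
proof (induction vs rule: path_edges.induct)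
  case (1 a b vs)
  have "{mk_edge ((a # b # vs) ! i) ((a # b # vs) ! Suc i) | i. Suc i < length (a # b # vs)}
      = insert (mk_edge a b) {mk_edge ((b # vs) ! i) ((b # vs) ! Suc i) | i. Suc i < length (b # vs)}"
    (is "?L = ?R")
  proof
    show "?L \<subseteq> ?R"
    proof
      fix e assume "e \<in> ?L"
      then obtain i where e: "e = mk_edge ((a # b # vs) ! i) ((a # b # vs) ! Suc i)"
        and i: "Suc i < length (a # b # vs)"
        by blast
      show "e \<in> ?R"
      proof (cases i)
        case (Suc j)
        with e i show ?thesis by auto
      qed (use e in simp)
    qed
    show "?R \<subseteq> ?L"
    proof
      fix e assume "e \<in> ?R"
      then consider "e = mk_edge a b"
        | i where "e = mk_edge ((b # vs) ! i) ((b # vs) ! Suc i)" "Suc i < length (b # vs)"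
        by blast
      then show "e \<in> ?L"
      proof cases
        case 1
        then show ?thesis by force
      next
        case 2
        then show ?thesis by (intro CollectI exI[of _ "Suc i"]) auto
      qed
    qed
  qed
  with 1 show ?case by simp
qed auto

lemma path_edges_snoc:
  "vs \<noteq> [] \<Longrightarrow> path_edges (vs @ [a]) = insert (mk_edge (last vs) a) (path_edges vs)"
  by (induction vs rule: path_edges.induct) auto

lemma conn_path_edges: "vs \<noteq> [] \<Longrightarrow> (hd vs, last vs) \<in> conn (path_edges vs)"
proof (induction vs rule: path_edges.induct)
  case (1 a b vs)
  have "(b, last (b # vs)) \<in> conn (path_edges (b # vs))"
    using "1.IH" by simp
  then have "(b, last (b # vs)) \<in> conn (path_edges (a # b # vs))"
    by (rule conn_mono[rotated]) auto
  moreover have "(a, b) \<in> conn (path_edges (a # b # vs))"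
    by (simp add: conn_mk_edge)
  ultimately show ?case
    by (metis conn_trans last_ConsR list.distinct(1) list.sel(1))
qed auto

lemma cycle_edges_conv_nth:
  assumes "vs \<noteq> []"
  shows "{mk_edge (vs ! i) (vs ! ((i + 1) mod length vs)) | i. i < length vs} = cycle_edges vs"
proof -
  let ?f = "\<lambda>i. mk_edge (vs ! i) (vs ! ((i + 1) mod length vs))"
  have "{i. i < length vs} = insert (length vs - 1) {i. Suc i < length vs}"
    using assms by auto
  then have "{?f i | i. i < length vs} = insert (?f (length vs - 1)) (?f ` {i. Suc i < length vs})"
    by (simp add: setcompr_eq_image)
  also have "?f (length vs - 1) = mk_edge (last vs) (hd vs)"
    using assms by (simp add: last_conv_nth hd_conv_nth)
  also have "?f ` {i. Suc i < length vs}
      = (\<lambda>i. mk_edge (vs ! i) (vs ! Suc i)) ` {i. Suc i < length vs}"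
    by (rule image_cong) simp_all
  finally show ?thesis
    unfolding cycle_edges_def path_edges_conv_nth by (simp add: setcompr_eq_image)
qed

lemma cycle_edge_sets_iff:
  "C \<in> cycle_edge_sets E \<longleftrightarrow> C \<subseteq> E \<and> (\<exists>vs. distinct vs \<and> 3 \<le> length vs \<and> C = cycle_edges vs)"
proof -
  have "(distinct vs \<and> length vs \<ge> 3 \<and>
        C = {mk_edge (vs ! i) (vs ! ((i + 1) mod length vs)) | i. i < length vs})
      \<longleftrightarrow> (distinct vs \<and> 3 \<le> length vs \<and> C = cycle_edges vs)" for vs
  proof (cases "vs = []")
    case False
    then show ?thesis by (simp only: cycle_edges_conv_nth[OF False])
  qed simp
  then show ?thesis
    by (simp only: cycle_edge_sets_def mem_Collect_eq)
qed

lemma cycle_edges_rotate1: "cycle_edges (rotate1 vs) = cycle_edges vs"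
proof (cases vs)
  case (Cons a ws)
  show ?thesis
  proof (cases "ws = []")
    case False
    then have "path_edges (a # ws) = insert (mk_edge a (hd ws)) (path_edges ws)"
      by (cases ws) auto
    with False show ?thesis
      unfolding Cons cycle_edges_def by (simp add: path_edges_snoc insert_commute)
  qed (simp add: Cons)
qed simp

lemma cycle_edges_rotate: "cycle_edges (rotate m vs) = cycle_edges vs"
  by (induction m) (simp_all add: cycle_edges_rotate1)

lemma cycle_edge_closes_rotation:
  assumes "c \<in> cycle_edges vs" "vs \<noteq> []"
  shows "\<exists>m. c = mk_edge (last (rotate m vs)) (hd (rotate m vs))"
proof (cases "c \<in> path_edges vs")
  case True
  then obtain i where c: "c = mk_edge (vs ! i) (vs ! Suc i)" and i: "Suc i < length vs"
    unfolding path_edges_conv_nth by blast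
  have "hd (rotate (Suc i) vs) = vs ! Suc i"
    using i hd_rotate_conv_nth[OF assms(2), of "Suc i"] by (simp del: rotate_Suc)
  moreover have "last (rotate (Suc i) vs) = vs ! i"
  proof -
    have "Suc i + (length vs - 1) = i + length vs"
      using i by simp
    with i have "(Suc i + (length vs - 1)) mod length vs = i"
      by simp
    then show ?thesis
      using assms(2) by (simp add: last_conv_nth nth_rotate del: rotate_Suc)
  qed
  ultimately show ?thesis using c mk_edge_commute by metis
next
  case False
  with assms(1) have "c = mk_edge (last (rotate 0 vs)) (hd (rotate 0 vs))"
    unfolding cycle_edges_def by simp
  then show ?thesis ..
qed

lemma closing_edge_notin_path_edges:
  assumes "distinct vs" "3 \<le> length vs"
  shows "mk_edge (last vs) (hd vs) \<notin> path_edges vs"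
proof
  assume "mk_edge (last vs) (hd vs) \<in> path_edges vs"
  moreover have "vs \<noteq> []" using assms(2) by auto
  ultimately obtain i where i: "Suc i < length vs"
    and eq: "mk_edge (vs ! (length vs - 1)) (vs ! 0) = mk_edge (vs ! i) (vs ! Suc i)"
    by (auto simp: path_edges_conv_nth last_conv_nth hd_conv_nth)
  have idx: "vs ! a = vs ! b \<longleftrightarrow> a = b" if "a < length vs" "b < length vs" for a b
    using nth_eq_iff_index_eq[OF assms(1) that] .
  have bounds: "0 < length vs" "length vs - 1 < length vs" "i < length vs"
    using i by auto
  from eq have "length vs - 1 = i \<and> 0 = Suc i \<or> length vs - 1 = Suc i \<and> 0 = i"
    unfolding mk_edge_eq_iff
    using idx[OF bounds(2,3)] idx[OF bounds(1) i] idx[OF bounds(2) i] idx[OF bounds(1,3)] by blast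
  with assms(2) show False by linarith
qed

text \<open>Rotate the cycle until \<open>c\<close> is its closing edge; the other edges form a path between the
  endpoints of \<open>c\<close>.\<close>

lemma cycle_minus_edge_conn:
  assumes C: "C \<in> cycle_edge_sets E" and "c \<in> C"
  shows "(fst c, snd c) \<in> conn (C - {c})"
proof -
  obtain vs where vs: "distinct vs" "3 \<le> length vs" "C = cycle_edges vs"
    using C unfolding cycle_edge_sets_iff by blast
  then obtain m where c: "c = mk_edge (last (rotate m vs)) (hd (rotate m vs))"
    using cycle_edge_closes_rotation \<open>c \<in> C\<close> by fastforce
  define ws where "ws = rotate m vs"
  have ws: "distinct ws" "3 \<le> length ws" "C = insert c (path_edges ws)"
    using vs c cycle_edges_rotate[of m vs] unfolding ws_def cycle_edges_def by auto
  have path: "path_edges ws \<subseteq> C - {c}"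
    using ws closing_edge_notin_path_edges[OF ws(1,2)] c unfolding ws_def by auto
  have "ws \<noteq> []" using ws(2) by auto
  then have "(hd ws, last ws) \<in> conn (C - {c})"
    by (rule conn_mono[OF path conn_path_edges])
  then show ?thesis
    unfolding c ws_def[symmetric] conn_mk_edge_iff by (rule conn_sym)
qed

lemma rtrancl_path_edges_subset:
  assumes "\<forall>(x, y) \<in> S. x < y" and "rtrancl_path (\<lambda>a b. (a, b) \<in> S \<union> S\<inverse>) u ys v"
  shows "path_edges (u # ys) \<subseteq> S"
  using assms(2) by induction (use assms(1) mk_edge_mem in auto)

lemma spanned_edge_closes_cycle:
  assumes G: "graph_on n E" and "S \<subseteq> E" and "x \<in> E" "x \<notin> S"
    and spanned: "(fst x, snd x) \<in> conn S"
  shows "\<exists>C \<in> cycle_edge_sets E. x \<in> C \<and> C \<subseteq> insert x S"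
proof -
  obtain u v where x: "x = (u, v)" by (cases x)
  have "u < v" using graph_on_less[OF G] \<open>x \<in> E\<close> x by simp
  have S: "\<forall>(a, b) \<in> S. a < b" using graph_on_less[OF G] \<open>S \<subseteq> E\<close> by blast
  have "(u, v) \<in> (S \<union> S\<inverse>)\<^sup>*"
    using spanned unfolding x conn_def by simp
  moreover have "{(a, b). (a, b) \<in> S \<union> S\<inverse>} = S \<union> S\<inverse>" by auto
  ultimately have "(\<lambda>a b. (a, b) \<in> S \<union> S\<inverse>)\<^sup>*\<^sup>* u v"
    unfolding rtranclp_rtrancl_eq by (simp only:)
  then obtain xs where "rtrancl_path (\<lambda>a b. (a, b) \<in> S \<union> S\<inverse>) u xs v"
    unfolding rtranclp_eq_rtrancl_path by blast
  then obtain ys where path: "rtrancl_path (\<lambda>a b. (a, b) \<in> S \<union> S\<inverse>) u ys v"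
    and "distinct (u # ys)"
    by (rule rtrancl_path_distinct)
  have S_path: "path_edges (u # ys) \<subseteq> S"
    using rtrancl_path_edges_subset[OF S path] .
  have "ys \<noteq> []" using path \<open>u < v\<close> by (auto elim: rtrancl_path.cases)
  then have last: "last (u # ys) = v" using rtrancl_path_last[OF path] by simp
  have x_closes: "mk_edge (last (u # ys)) (hd (u # ys)) = x"
    unfolding last x mk_edge_def using \<open>u < v\<close> by simp
  have "3 \<le> length (u # ys)"
  proof (rule ccontr)
    assume "\<not> 3 \<le> length (u # ys)"
    then have "length ys < 2" by simp
    moreover have "0 < length ys" using \<open>ys \<noteq> []\<close> by simp
    ultimately have "length ys = 1" by linarith
    with last have "ys = [v]"
      by (cases ys) auto
    then have "x \<in> path_edges (u # ys)"
      using \<open>u < v\<close> by (simp add: x mk_edge_def)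
    with S_path \<open>x \<notin> S\<close> show False by blast
  qed
  moreover have cycle: "cycle_edges (u # ys) = insert x (path_edges (u # ys))"
    unfolding cycle_edges_def x_closes ..
  moreover have "cycle_edges (u # ys) \<subseteq> E"
    unfolding cycle using S_path \<open>S \<subseteq> E\<close> \<open>x \<in> E\<close> by blast
  ultimately have "cycle_edges (u # ys) \<in> cycle_edge_sets E"
    unfolding cycle_edge_sets_iff using \<open>distinct (u # ys)\<close> by blast
  with cycle S_path show ?thesis by blast
qed

section \<open>Broken circuits and bounded-below sets\<close>

lemma linear_order_on_has_least:
  assumes lo: "linear_order_on E R" and "finite C" "C \<noteq> {}" "C \<subseteq> E"
  shows "\<exists>c \<in> C. \<forall>d \<in> C. (c, d) \<in> R"
proof -
  have "trans R" "total_on E R" "refl_on E R"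
    using lo by (auto simp: order_on_defs)
  have "transp_on C (\<lambda>a b. (a, b) \<in> R)"
    using \<open>trans R\<close> unfolding transp_on_def trans_def by blast
  moreover have "totalp_on C (\<lambda>a b. (a, b) \<in> R)"
    using \<open>total_on E R\<close> \<open>C \<subseteq> E\<close> unfolding totalp_on_def total_on_def by blast
  ultimately obtain c where "c \<in> C" "\<forall>d \<in> C. d \<noteq> c \<longrightarrow> (c, d) \<in> R"
    using Finite_Set.bex_least_element[OF \<open>finite C\<close> \<open>C \<noteq> {}\<close>] by blast
  moreover from this have "(c, c) \<in> R"
    using \<open>refl_on E R\<close> \<open>C \<subseteq> E\<close> unfolding refl_on_def by blast
  ultimately show ?thesis by metis
qed

lemma smallest_edge_eqI:
  assumes lo: "linear_order_on E R" and "C \<subseteq> E" "c \<in> C" "\<forall>d \<in> C. (c, d) \<in> R"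
  shows "smallest_edge R C = c"
  unfolding smallest_edge_def
proof (rule the_equality)
  show "c \<in> C \<and> (\<forall>d \<in> C. (c, d) \<in> R)" using assms by simp
  have "antisym R" using lo by (simp add: order_on_defs)
  then show "c' = c" if "c' \<in> C \<and> (\<forall>d \<in> C. (c', d) \<in> R)" for c'
    using that assms(3,4) by (auto dest: antisymD)
qed

definition spans_smaller_edge :: "edge set \<Rightarrow> (edge \<times> edge) set \<Rightarrow> edge set \<Rightarrow> bool" where
  "spans_smaller_edge E R S \<longleftrightarrow> (\<exists>x \<in> E. (fst x, snd x) \<in> conn S \<and> (\<forall>s \<in> S. strict R x s))"

lemma broken_circuit_spans_smaller_edge:
  assumes G: "graph_on n E" and lo: "linear_order_on E R" and B: "B \<in> broken_circuits E R"
  shows "spans_smaller_edge E R B"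
proof -
  obtain C where C: "C \<in> cycle_edge_sets E" and B_eq: "B = C - {smallest_edge R C}"
    using B unfolding broken_circuits_def by blast
  have "C \<subseteq> E" using C unfolding cycle_edge_sets_iff by blast
  moreover have "C \<noteq> {}" using C unfolding cycle_edge_sets_iff cycle_edges_def by blast
  ultimately obtain c where c: "c \<in> C" "\<forall>d \<in> C. (c, d) \<in> R"
    using linear_order_on_has_least[OF lo finite_subset[OF _ graph_on_finite[OF G]]] by blast
  have "B = C - {c}"
    unfolding B_eq smallest_edge_eqI[OF lo \<open>C \<subseteq> E\<close> c] ..
  then show ?thesis
    unfolding spans_smaller_edge_def strict_def
    using cycle_minus_edge_conn[OF C c(1)] c \<open>C \<subseteq> E\<close> by blast
qed

lemma NBC_iff_no_subset_spans_smaller_edge: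
  assumes G: "graph_on n E" and lo: "linear_order_on E R" and "S \<subseteq> E"
  shows "NBC E R S \<longleftrightarrow> (\<forall>S' \<subseteq> S. \<not> spans_smaller_edge E R S')"
proof
  assume nbc: "NBC E R S"
  show "\<forall>S' \<subseteq> S. \<not> spans_smaller_edge E R S'"
  proof (intro allI impI notI)
    fix S' assume "S' \<subseteq> S" "spans_smaller_edge E R S'"
    then obtain x where x: "x \<in> E" "(fst x, snd x) \<in> conn S'" "\<forall>s \<in> S'. strict R x s"
      unfolding spans_smaller_edge_def by blast
    then have "x \<notin> S'" unfolding strict_def by blast
    then obtain C where C: "C \<in> cycle_edge_sets E" "x \<in> C" "C \<subseteq> insert x S'"
      using spanned_edge_closes_cycle[OF G _ x(1) _ x(2)] \<open>S' \<subseteq> S\<close> \<open>S \<subseteq> E\<close> by blast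
    have "refl_on E R" using lo by (simp add: order_on_defs)
    then have "\<forall>d \<in> C. (x, d) \<in> R"
      using C(3) x(1,3) unfolding refl_on_def strict_def by blast
    then have "smallest_edge R C = x"
      using smallest_edge_eqI[OF lo _ C(2)] C(1) unfolding cycle_edge_sets_iff by blast
    then have "C - {x} \<in> broken_circuits E R"
      using C(1) unfolding broken_circuits_def by force
    moreover have "C - {x} \<subseteq> S" using C(3) \<open>S' \<subseteq> S\<close> by blast
    ultimately show False using nbc unfolding NBC_def by blast
  qed
next
  assume "\<forall>S' \<subseteq> S. \<not> spans_smaller_edge E R S'"
  then show "NBC E R S"
    unfolding NBC_def using broken_circuit_spans_smaller_edge[OF G lo] \<open>S \<subseteq> E\<close> by blast
qed

lemma atom_lt_singleton_iff: "atom_lt R {x} {y} \<longleftrightarrow> strict R x y"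
  unfolding atom_lt_def by blast

lemma bounded_below_singletons_iff:
  assumes G: "graph_on n E" and "S \<subseteq> E" and nc: "noncrossing S"
  shows "bounded_below (NC n E) (atom_lt R) ((\<lambda>e. {e}) ` S) \<longleftrightarrow> spans_smaller_edge E R S"
proof -
  have "bounded_below (NC n E) (atom_lt R) ((\<lambda>e. {e}) ` S)
    \<longleftrightarrow> (\<exists>x \<in> E. (\<forall>s \<in> S. strict R x s) \<and> {x} \<subset> edge_closure E S)"
    unfolding bounded_below_def atoms_NC[OF G] join_singletons_noncrossing[OF assms]
    by (auto simp: atom_lt_singleton_iff)
  moreover have "{x} \<subset> edge_closure E S \<longleftrightarrow> (fst x, snd x) \<in> conn S"
    if "x \<in> E" and below: "\<forall>s \<in> S. strict R x s" for x
  proof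
    assume "(fst x, snd x) \<in> conn S"
    with \<open>x \<in> E\<close> have "S \<noteq> {}"
      using graph_on_less[OF G, of "fst x" "snd x"] conn_empty[of "fst x" "snd x"] by auto
    then obtain s where "s \<in> S" "s \<noteq> x"
      using below unfolding strict_def by blast
    with \<open>x \<in> E\<close> \<open>(fst x, snd x) \<in> conn S\<close> show "{x} \<subset> edge_closure E S"
      using subset_edge_closure[OF \<open>S \<subseteq> E\<close>] unfolding edge_closure_def by blast
  qed (auto simp: edge_closure_def)
  ultimately show ?thesis
    unfolding spans_smaller_edge_def by blast
qed

lemma NBB_singletons_iff:
  assumes G: "graph_on n E" and "S \<subseteq> E" and nc: "noncrossing S"
  shows "NBB (NC n E) (atom_lt R) ((\<lambda>e. {e}) ` S) \<longleftrightarrow> (\<forall>S' \<subseteq> S. \<not> spans_smaller_edge E R S')"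
proof -
  have "bounded_below (NC n E) (atom_lt R) ((\<lambda>e. {e}) ` S') \<longleftrightarrow> spans_smaller_edge E R S'"
    if "S' \<subseteq> S" for S'
    using bounded_below_singletons_iff[OF G _ noncrossing_subset[OF nc that]] that \<open>S \<subseteq> E\<close>
    by blast
  then show ?thesis
    unfolding NBB_def subset_image_iff by blast
qed

text \<open>Upper crossing closure makes every crossing pair of atoms bounded below.\<close>

lemma NBB_singletons_noncrossing:
  assumes G: "graph_on n E" and ucc: "upper_crossing_closed n E R" and "S \<subseteq> E"
    and nbb: "NBB (NC n E) (atom_lt R) ((\<lambda>e. {e}) ` S)"
  shows "noncrossing S"
  unfolding noncrossing_def
proof (intro ballI notI)
  fix e f assume "e \<in> S" "f \<in> S" and ef: "crosses e f"
  with \<open>S \<subseteq> E\<close> have "e \<in> E" "f \<in> E" by auto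
  have cc: "crossing_closed_pair n E e f"
    using ucc \<open>e \<in> E\<close> \<open>f \<in> E\<close> ef unfolding upper_crossing_closed_def crossing_closed_def by blast
  obtain h where h: "h \<in> edges_within E (Jcl n E e f)" "strict R h e" "strict R h f"
    using ucc \<open>e \<in> E\<close> \<open>f \<in> E\<close> ef unfolding upper_crossing_closed_def by blast
  have "e \<in> edges_within E (Jcl n E e f)"
    using Jcl_in_icsets[OF cc] unfolding icsets_def by blast
  with h have "{h} \<subset> join (NC n E) {{e}, {f}}"
    unfolding join_crossing_pair[OF G cc \<open>e \<in> E\<close> \<open>f \<in> E\<close> ef] strict_def by auto
  moreover have "{h} \<in> atoms (NC n E)"
    using h(1) unfolding atoms_NC[OF G] edges_within_def by blast
  ultimately have "bounded_below (NC n E) (atom_lt R) {{e}, {f}}"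
    unfolding bounded_below_def using h(2,3) atom_lt_singleton_iff by blast
  moreover have "{{e}, {f}} \<subseteq> (\<lambda>e. {e}) ` S" using \<open>e \<in> S\<close> \<open>f \<in> S\<close> by blast
  ultimately show False using nbb unfolding NBB_def by blast
qed

lemma NBB_singletons_iff_noncrossing_NBC:
  assumes G: "graph_on n E" and lo: "linear_order_on E R" and ucc: "upper_crossing_closed n E R"
    and "S \<subseteq> E"
  shows "NBB (NC n E) (atom_lt R) ((\<lambda>e. {e}) ` S) \<longleftrightarrow> noncrossing_NBC E R S"
proof -
  have "NBB (NC n E) (atom_lt R) ((\<lambda>e. {e}) ` S) \<longleftrightarrow> NBC E R S"
    if "noncrossing S"
    using NBB_singletons_iff[OF G \<open>S \<subseteq> E\<close> that]
      NBC_iff_no_subset_spans_smaller_edge[OF G lo \<open>S \<subseteq> E\<close>] by simp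
  then show ?thesis
    using NBB_singletons_noncrossing[OF G ucc \<open>S \<subseteq> E\<close>] noncrossing_NBC_iff by blast
qed

theorem lemma3p9:
  fixes n k :: nat and E :: "edge set" and R :: "(edge \<times> edge) set"
  assumes "graph_on n E"
    and "linear_order_on E R"
    and "upper_crossing_closed n E R"
  shows "{T. T \<subseteq> atoms (NC n E) \<and> card T = k \<and> NBB (NC n E) (atom_lt R) T}
         = (\<lambda>S. (\<lambda>e. {e}) ` S) ` {S. noncrossing_NBC E R S \<and> card S = k}"
proof -
  note nbb_iff = NBB_singletons_iff_noncrossing_NBC[OF assms]
  have card_singletons: "card ((\<lambda>e. {e}) ` S) = card S" for S :: "edge set"
    by (rule card_image) (simp add: inj_on_def)
  show ?thesis
  proof (intro equalityI subsetI)
    fix T assume "T \<in> {T. T \<subseteq> atoms (NC n E) \<and> card T = k \<and> NBB (NC n E) (atom_lt R) T}"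
    then obtain S where "S \<subseteq> E" and T: "T = (\<lambda>e. {e}) ` S"
      and "card T = k" "NBB (NC n E) (atom_lt R) T"
      unfolding atoms_NC[OF assms(1)] subset_image_iff by blast
    then have "noncrossing_NBC E R S \<and> card S = k"
      using nbb_iff card_singletons by simp
    with T show "T \<in> (\<lambda>S. (\<lambda>e. {e}) ` S) ` {S. noncrossing_NBC E R S \<and> card S = k}"
      by blast
  next
    fix T assume "T \<in> (\<lambda>S. (\<lambda>e. {e}) ` S) ` {S. noncrossing_NBC E R S \<and> card S = k}"
    then obtain S where S: "noncrossing_NBC E R S" "card S = k" and T: "T = (\<lambda>e. {e}) ` S"
      by blast
    moreover have "S \<subseteq> E"
      using S(1) unfolding noncrossing_NBC_def NBC_def by simp
    ultimately show "T \<in> {T. T \<subseteq> atoms (NC n E) \<and> card T = k \<and> NBB (NC n E) (atom_lt R) T}"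
      unfolding atoms_NC[OF assms(1)] using nbb_iff card_singletons by auto
  qed
qed

end
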